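(* Let $(Z,\Delta)$ be a foliated surface. Every regular leaf of $\Delta$ is non-special; equivalently, every special leaf of $\Delta$ is singular.
   Context: A foliated surface is a pair $(Z,\Delta)$ with $Z$ a two-dimensional topological manifold (possibly with boundary) and $\Delta$ a one-dimensional foliation on $Z$ such that each connected component of $\partial Z$ is a leaf. For $A\subset Z$ its saturation $\mathrm{Sat}(A)$ is the union of all leaves meeting $A$. For a leaf $\omega$ let $\mathrm{hcl}(\omega)=\bigcap_{N}\overline{\mathrm{Sat}(N)}$, where $N$ runs over all open neighbourhoods of $\omega$; $\omega$ is special if $\omega\neq\mathrm{hcl}(\omega)$. A leaf $\omega\subset \operatorname{Int} Z$ is regular if there is a saturated neighbourhood $U$ of $\omega$ such that $(\overline{U},U)$ is foliated homeomorphic (leaves to leaves) to $(\mathbb{R}\times[-1,1],\mathbb{R}\times(-1,1))$ foliated by horizontal lines, with $\omega$ going to $\mathbb{R}\times 0$; a leaf $\omega\subset\partial Z$ is regular if there is such $U$ with $(\overline{U},U)$ foliated homeomorphic to $(\mathbb{R}\times[0,1],\mathbb{R}\times[0,1))$ with $\omega$ going to $\mathbb{R}\times 0$. Non-regular leaves are singular. *)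

theory Defs
  imports "HOL-Analysis.Analysis"
begin

definition halfplane :: "(real \<times> real) set" where
  "halfplane = {p. snd p \<ge> 0}"

definition surface_chart :: "'a topology \<Rightarrow> 'a set \<Rightarrow> ('a \<Rightarrow> real \<times> real) \<Rightarrow> bool" where
  "surface_chart Z W \<phi> \<longleftrightarrow> openin Z W \<and>
     (\<exists>V. openin (subtopology euclidean halfplane) V \<and>
          homeomorphic_map (subtopology Z W) (subtopology euclidean V) \<phi>)"

definition mboundary :: "'a topology \<Rightarrow> 'a set" where
  "mboundary Z = {z \<in> topspace Z. \<exists>W \<phi>. surface_chart Z W \<phi> \<and> z \<in> W \<and> snd (\<phi> z) = 0}"

definition minterior :: "'a topology \<Rightarrow> 'a set" where
  "minterior Z = topspace Z - mboundary Z"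

text \<open>Foliated atlas: charts covering Z, the foliation being given in every chart by the
  horizontal lines; the transverse coordinates of overlapping charts are locally compatible
  (locally, the horizontal level sets of one chart are those of the other).\<close>
definition foliated_atlas :: "'a topology \<Rightarrow> ('a set \<times> ('a \<Rightarrow> real \<times> real)) set \<Rightarrow> bool" where
  "foliated_atlas Z A \<longleftrightarrow>
     (\<forall>(W, \<phi>) \<in> A. surface_chart Z W \<phi>) \<and>
     (\<forall>z \<in> topspace Z. \<exists>(W, \<phi>) \<in> A. z \<in> W) \<and>
     (\<forall>(W1, \<phi>1) \<in> A. \<forall>(W2, \<phi>2) \<in> A. \<forall>z \<in> W1 \<inter> W2.
        \<exists>N. openin Z N \<and> z \<in> N \<and> N \<subseteq> W1 \<inter> W2 \<and>
          (\<forall>x \<in> N. \<forall>y \<in> N. snd (\<phi>1 x) = snd (\<phi>1 y) \<longleftrightarrow> snd (\<phi>2 x) = snd (\<phi>2 y)))"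

text \<open>x and y lie in a common plaque of some chart of A (plaque = connected component of a
  horizontal slice of the chart image).\<close>
definition plaque_rel :: "('a set \<times> ('a \<Rightarrow> real \<times> real)) set \<Rightarrow> 'a \<Rightarrow> 'a \<Rightarrow> bool" where
  "plaque_rel A x y \<longleftrightarrow>
     (\<exists>(W, \<phi>) \<in> A. x \<in> W \<and> y \<in> W \<and>
        (\<exists>C. connected C \<and> C \<subseteq> \<phi> ` W \<inter> {p. snd p = snd (\<phi> x)} \<and> \<phi> x \<in> C \<and> \<phi> y \<in> C))"

text \<open>A foliated surface (Z, Delta): Z a 2-dimensional topological manifold (Hausdorff, second
  countable, locally modelled on the half-plane), Delta the set of leaves of a one-dimensional
  foliation (the classes of the equivalence relation generated by plaques of a foliated atlas),
  such that every connected component of the boundary of Z is a leaf.\<close>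
definition foliated_surface :: "'a topology \<Rightarrow> 'a set set \<Rightarrow> bool" where
  "foliated_surface Z \<Delta> \<longleftrightarrow>
     Hausdorff_space Z \<and> second_countable Z \<and>
     (\<exists>A. foliated_atlas Z A \<and>
          \<Delta> = {{y \<in> topspace Z. (plaque_rel A)\<^sup>*\<^sup>* x y} | x. x \<in> topspace Z}) \<and>
     (\<forall>C \<in> connected_components_of (subtopology Z (mboundary Z)). C \<in> \<Delta>)"

definition Sat :: "'a set set \<Rightarrow> 'a set \<Rightarrow> 'a set" where
  "Sat \<Delta> S = \<Union>{L \<in> \<Delta>. L \<inter> S \<noteq> {}}"

definition hcl :: "'a topology \<Rightarrow> 'a set set \<Rightarrow> 'a set \<Rightarrow> 'a set" where
  "hcl Z \<Delta> \<omega> = \<Inter>{Z closure_of (Sat \<Delta> N) | N. openin Z N \<and> \<omega> \<subseteq> N}"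

definition special_leaf :: "'a topology \<Rightarrow> 'a set set \<Rightarrow> 'a set \<Rightarrow> bool" where
  "special_leaf Z \<Delta> \<omega> \<longleftrightarrow> \<omega> \<in> \<Delta> \<and> \<omega> \<noteq> hcl Z \<Delta> \<omega>"

text \<open>h is a foliated homeomorphism from (closure U, U) onto (R x J', R x J) (J' the closure
  of J), with omega going to R x {0}: leaves of Delta in closure U go to horizontal lines.\<close>
definition regular_nbhd ::
  "'a topology \<Rightarrow> 'a set set \<Rightarrow> 'a set \<Rightarrow> real set \<Rightarrow> real set \<Rightarrow> bool" where
  "regular_nbhd Z \<Delta> \<omega> J' J \<longleftrightarrow>
     (\<exists>U (h :: 'a \<Rightarrow> real \<times> real). U \<subseteq> topspace Z \<and> \<omega> \<subseteq> Z interior_of U \<and> Sat \<Delta> U = U \<and>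
        homeomorphic_map (subtopology Z (Z closure_of U))
                         (subtopology euclidean (UNIV \<times> J')) h \<and>
        h ` U = UNIV \<times> J \<and> h ` \<omega> = UNIV \<times> {0} \<and>
        (\<forall>x \<in> Z closure_of U. \<forall>y \<in> Z closure_of U.
           (\<exists>L \<in> \<Delta>. x \<in> L \<and> y \<in> L) \<longleftrightarrow> snd (h x) = snd (h y)))"

definition regular_leaf :: "'a topology \<Rightarrow> 'a set set \<Rightarrow> 'a set \<Rightarrow> bool" where
  "regular_leaf Z \<Delta> \<omega> \<longleftrightarrow> \<omega> \<in> \<Delta> \<and>
     ((\<omega> \<subseteq> minterior Z \<and> regular_nbhd Z \<Delta> \<omega> {-1..1} {-1<..<1}) \<or>
      (\<omega> \<subseteq> mboundary Z \<and> regular_nbhd Z \<Delta> \<omega> {0..1} {0..<1}))"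

definition singular_leaf :: "'a topology \<Rightarrow> 'a set set \<Rightarrow> 'a set \<Rightarrow> bool" where
  "singular_leaf Z \<Delta> \<omega> \<longleftrightarrow> \<omega> \<in> \<Delta> \<and> \<not> regular_leaf Z \<Delta> \<omega>"

end

theory Submission
  imports Defs
begin

text \<open>A regular leaf \<omega> sits at level 0 of a foliated product chart h, whose transverse
  coordinate is constant along leaves.  A thin band around \<omega> is a saturated neighbourhood, so
  the closure of its saturation stays inside the closed band; letting the width shrink, hcl \<omega>
  lies in level 0 of the chart, which is \<omega> itself.  Conversely every leaf lies in its hcl.\<close>

lemma subset_hcl:
  assumes "\<omega> \<in> \<Delta>" "\<omega> \<subseteq> topspace Z"
  shows "\<omega> \<subseteq> hcl Z \<Delta> \<omega>"
  unfolding hcl_def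
proof (rule Inter_greatest)
  fix K assume "K \<in> {Z closure_of Sat \<Delta> N |N. openin Z N \<and> \<omega> \<subseteq> N}"
  then obtain N where K: "K = Z closure_of Sat \<Delta> N" and "\<omega> \<subseteq> N" by blast
  then have "\<omega> \<subseteq> Sat \<Delta> N" unfolding Sat_def using assms(1) by blast
  then show "\<omega> \<subseteq> K"
    unfolding K using assms(2) closure_of_subset_Int[of Z "Sat \<Delta> N"] by blast
qed

lemma hcl_subset_closure_of_Sat:
  assumes "openin Z N" "\<omega> \<subseteq> N"
  shows "hcl Z \<Delta> \<omega> \<subseteq> Z closure_of (Sat \<Delta> N)"
  using assms unfolding hcl_def by blast

lemma leaf_subset_saturated:
  assumes "Sat \<Delta> U = U" "L \<in> \<Delta>" "x \<in> L" "x \<in> U"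
  shows "L \<subseteq> U"
  using assms unfolding Sat_def by blast

lemma hcl_subset_band:
  assumes C: "closedin Z C"
    and f: "continuous_map (subtopology Z C) euclideanreal f"
    and U: "U \<subseteq> C" "\<omega> \<subseteq> Z interior_of U" "Sat \<Delta> U = U"
    and leaf_level: "\<And>L x y. \<lbrakk>L \<in> \<Delta>; x \<in> L; y \<in> L; x \<in> C; y \<in> C\<rbrakk> \<Longrightarrow> f x = f y"
    and \<omega>_level: "\<And>x. x \<in> \<omega> \<Longrightarrow> f x = 0"
    and "e > 0"
  shows "hcl Z \<Delta> \<omega> \<subseteq> {x \<in> C. \<bar>f x\<bar> \<le> e}"
proof -
  have C_top: "topspace (subtopology Z C) = C"
    using closedin_subset[OF C] by auto
  have "openin (subtopology Z C) {x \<in> topspace (subtopology Z C). f x \<in> {t. \<bar>t\<bar> < e}}"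
    by (rule openin_continuous_map_preimage[OF f]) (simp add: open_Collect_less continuous_intros)
  then have "openin (subtopology Z C) {x \<in> C. \<bar>f x\<bar> < e}"
    by (simp only: C_top mem_Collect_eq)
  then obtain S where S: "openin Z S" "{x \<in> C. \<bar>f x\<bar> < e} = S \<inter> C"
    unfolding openin_subtopology by auto
  define N where "N = Z interior_of U \<inter> S"
  have N_open: "openin Z N"
    unfolding N_def using S(1) by (simp add: openin_Int)
  have N_band: "N \<subseteq> {x \<in> C. \<bar>f x\<bar> < e}"
    unfolding N_def using S(2) interior_of_subset[of Z U] U(1) by blast
  have \<omega>_N: "\<omega> \<subseteq> N"
  proof
    fix x assume "x \<in> \<omega>"
    then have "x \<in> Z interior_of U" "x \<in> C" using U(1,2) interior_of_subset[of Z U] by blast+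
    moreover have "\<bar>f x\<bar> < e" using \<omega>_level[OF \<open>x \<in> \<omega>\<close>] \<open>e > 0\<close> by simp
    ultimately show "x \<in> N" unfolding N_def using S(2) by blast
  qed
  have "closedin (subtopology Z C) {x \<in> topspace (subtopology Z C). f x \<in> {t. \<bar>t\<bar> \<le> e}}"
    by (rule closedin_continuous_map_preimage[OF f]) (simp add: closed_Collect_le continuous_intros)
  then have "closedin (subtopology Z C) {x \<in> C. \<bar>f x\<bar> \<le> e}"
    by (simp only: C_top mem_Collect_eq)
  then have band_closed: "closedin Z {x \<in> C. \<bar>f x\<bar> \<le> e}"
    using C closedin_trans_full by auto
  have Sat_band: "Sat \<Delta> N \<subseteq> {x \<in> C. \<bar>f x\<bar> \<le> e}"
  proof
    fix y assume "y \<in> Sat \<Delta> N"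
    then obtain L x where L: "L \<in> \<Delta>" "y \<in> L" "x \<in> L" "x \<in> N"
      unfolding Sat_def by blast
    have "x \<in> U" using L(4) interior_of_subset[of Z U] unfolding N_def by blast
    then have "L \<subseteq> C" using leaf_subset_saturated[OF U(3) L(1,3)] U(1) by blast
    then have "f y = f x" using leaf_level L by blast
    then show "y \<in> {x \<in> C. \<bar>f x\<bar> \<le> e}" using L N_band \<open>L \<subseteq> C\<close> by auto
  qed
  have "hcl Z \<Delta> \<omega> \<subseteq> Z closure_of (Sat \<Delta> N)"
    by (rule hcl_subset_closure_of_Sat[OF N_open \<omega>_N])
  also have "\<dots> \<subseteq> {x \<in> C. \<bar>f x\<bar> \<le> e}"
    by (rule closure_of_minimal[OF Sat_band band_closed])
  finally show ?thesis .
qed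

lemma hcl_subset_level_zero:
  assumes "closedin Z C"
    and "continuous_map (subtopology Z C) euclideanreal f"
    and "U \<subseteq> C" "\<omega> \<subseteq> Z interior_of U" "Sat \<Delta> U = U"
    and "\<And>L x y. \<lbrakk>L \<in> \<Delta>; x \<in> L; y \<in> L; x \<in> C; y \<in> C\<rbrakk> \<Longrightarrow> f x = f y"
    and "\<And>x. x \<in> \<omega> \<Longrightarrow> f x = 0"
  shows "hcl Z \<Delta> \<omega> \<subseteq> {x \<in> C. f x = 0}"
proof
  fix y assume y: "y \<in> hcl Z \<Delta> \<omega>"
  have band: "y \<in> C \<and> \<bar>f y\<bar> \<le> e" if "e > 0" for e
    using hcl_subset_band[of Z C f U \<omega> \<Delta> e] assms that y by blast
  then have "\<bar>f y\<bar> \<le> 0"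
    using field_le_epsilon[of "\<bar>f y\<bar>" 0] by simp
  then show "y \<in> {x \<in> C. f x = 0}" using band[of 1] by simp
qed

lemma hcl_subset_regular_leaf:
  assumes "regular_nbhd Z \<Delta> \<omega> J' J"
  shows "hcl Z \<Delta> \<omega> \<subseteq> \<omega>"
proof -
  obtain U and h :: "'a \<Rightarrow> real \<times> real"
    where U: "U \<subseteq> topspace Z" "\<omega> \<subseteq> Z interior_of U" "Sat \<Delta> U = U"
      and h: "homeomorphic_map (subtopology Z (Z closure_of U)) (subtopology euclidean (UNIV \<times> J')) h"
      and h_\<omega>: "h ` \<omega> = UNIV \<times> {0}"
      and h_leaves: "\<forall>x \<in> Z closure_of U. \<forall>y \<in> Z closure_of U.
           (\<exists>L \<in> \<Delta>. x \<in> L \<and> y \<in> L) \<longleftrightarrow> snd (h x) = snd (h y)"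
    using assms unfolding regular_nbhd_def by blast
  define C where "C = Z closure_of U"
  have U_C: "U \<subseteq> C" unfolding C_def using U(1) by (rule closure_of_subset)
  have \<omega>_C: "\<omega> \<subseteq> C" using U(2) interior_of_subset[of Z U] U_C by blast
  have C_top: "topspace (subtopology Z C) = C"
    unfolding C_def by (rule topspace_subtopology_subset[OF closure_of_subset_topspace])
  have inj: "inj_on h C"
    using homeomorphic_imp_injective_map[OF h] unfolding C_top[unfolded C_def] C_def .
  have h_cont: "continuous_map (subtopology Z C) euclidean h"
    unfolding C_def
    by (rule continuous_map_into_fulltopology[OF homeomorphic_imp_continuous_map[OF h]])
  have "continuous_map euclidean euclideanreal (snd :: real \<times> real \<Rightarrow> real)"
    by (simp add: continuous_on_snd continuous_on_id)
  from continuous_map_compose[OF h_cont this]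
  have snd_h: "continuous_map (subtopology Z C) euclideanreal (\<lambda>x. snd (h x))"
    unfolding o_def .
  have "hcl Z \<Delta> \<omega> \<subseteq> {x \<in> C. snd (h x) = 0}"
  proof (rule hcl_subset_level_zero[OF _ snd_h U_C U(2,3)])
    show "closedin Z C" unfolding C_def by simp
    show "\<And>L x y. \<lbrakk>L \<in> \<Delta>; x \<in> L; y \<in> L; x \<in> C; y \<in> C\<rbrakk> \<Longrightarrow> snd (h x) = snd (h y)"
      using h_leaves unfolding C_def by blast
    show "snd (h x) = 0" if "x \<in> \<omega>" for x
      using imageI[OF that, of h] unfolding h_\<omega> by auto
  qed
  also have "{x \<in> C. snd (h x) = 0} \<subseteq> \<omega>"
  proof
    fix y assume y: "y \<in> {x \<in> C. snd (h x) = 0}"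
    then have "h y \<in> h ` \<omega>" unfolding h_\<omega> by (simp add: mem_Times_iff)
    then obtain x where x: "x \<in> \<omega>" "h y = h x" by (rule imageE)
    have "y = x" using inj_onD[OF inj x(2)] y \<omega>_C x(1) by blast
    with x show "y \<in> \<omega>" by simp
  qed
  finally show ?thesis .
qed

theorem lemma2p6:
  fixes Z :: "'a topology" and \<Delta> :: "'a set set" and \<omega> :: "'a set"
  assumes "foliated_surface Z \<Delta>" and "\<omega> \<in> \<Delta>" and "regular_leaf Z \<Delta> \<omega>"
  shows "\<not> special_leaf Z \<Delta> \<omega>"
proof -
  obtain J' J where R: "regular_nbhd Z \<Delta> \<omega> J' J"
    using assms(3) unfolding regular_leaf_def by blast
  then obtain U where "\<omega> \<subseteq> Z interior_of U" unfolding regular_nbhd_def by blast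
  then have "\<omega> \<subseteq> topspace Z" by (meson interior_of_subset_topspace order_trans)
  then have "\<omega> \<subseteq> hcl Z \<Delta> \<omega>" by (rule subset_hcl[OF assms(2)])
  with hcl_subset_regular_leaf[OF R] show ?thesis unfolding special_leaf_def by blast
qed

end
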